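(* Let $\mathcal{X}$ be a finite alphabet and $P_0,P_1$ any two probability distributions on $\mathcal{X}$. There exists $\varepsilon'(P_0,P_1)>0$ such that for all $\varepsilon\le\varepsilon'$, the binary mechanism maximizes the Chernoff information $I_{ch}(Q_0,Q_1)$ between the induced output distributions over all $\varepsilon$-LDP mechanisms; that is, the maximum of $I_{ch}(Q_0,Q_1)$ over all $\varepsilon$-LDP mechanisms (with finite output alphabet) is attained by a binary mechanism $W^b_{\tau}$ for a suitable $\tau>0$.
   Context: A mechanism $W_{Y|X}:\mathcal{X}\to\mathcal{Y}$ ($\mathcal{Y}$ finite) is $\varepsilon$-LDP if $W_{Y|X}(S|x)\le e^{\varepsilon}W_{Y|X}(S|x')$ for all $x,x'$ and $S\subseteq\mathcal{Y}$; $Q_i(y)=\sum_xP_i(x)W_{Y|X}(y|x)$. Binary mechanism $W^b_\tau:\mathcal{X}\to\{0,1\}$ (parameter $\tau>0$): set $\mathcal{S}_\tau=\{x:P_0(x)\ge\tau P_1(x)\}$, map $x$ to $V=0$ if $x\in\mathcal{S}_\tau$ and $V=1$ otherwise, then output $Y=V$ with probability $\frac{e^\varepsilon}{e^\varepsilon+1}$ and $Y=1-V$ with probability $\frac{1}{e^\varepsilon+1}$. Chernoff information: $I_{ch}(Q_0,Q_1)=-\min_{\lambda\in(0,1)}\log\sum_yQ_0(y)^\lambda Q_1(y)^{1-\lambda}$. *)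

theory Defs
  imports Complex_Main
begin

definition is_distr :: "('x::finite \<Rightarrow> real) \<Rightarrow> bool" where
  "is_distr P \<longleftrightarrow> (\<forall>x. 0 \<le> P x) \<and> (\<Sum>x\<in>UNIV. P x) = 1"

text \<open>A mechanism with finite output alphabet {0..<k} (any finite alphabet is
  in bijection with such a set): W x y is the probability of output y given input x.\<close>
definition is_mechanism :: "nat \<Rightarrow> ('x::finite \<Rightarrow> nat \<Rightarrow> real) \<Rightarrow> bool" where
  "is_mechanism k W \<longleftrightarrow>
     (\<forall>x. \<forall>y\<in>{..<k}. 0 \<le> W x y) \<and> (\<forall>x. (\<Sum>y\<in>{..<k}. W x y) = 1)"

definition is_LDP :: "real \<Rightarrow> nat \<Rightarrow> ('x::finite \<Rightarrow> nat \<Rightarrow> real) \<Rightarrow> bool" where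
  "is_LDP \<epsilon> k W \<longleftrightarrow>
     (\<forall>x x'. \<forall>S\<subseteq>{..<k}. (\<Sum>y\<in>S. W x y) \<le> exp \<epsilon> * (\<Sum>y\<in>S. W x' y))"

definition out_distr :: "('x::finite \<Rightarrow> real) \<Rightarrow> ('x \<Rightarrow> nat \<Rightarrow> real) \<Rightarrow> nat \<Rightarrow> real" where
  "out_distr P W y = (\<Sum>x\<in>UNIV. P x * W x y)"

definition chernoff_info :: "nat set \<Rightarrow> (nat \<Rightarrow> real) \<Rightarrow> (nat \<Rightarrow> real) \<Rightarrow> real" where
  "chernoff_info Y Q0 Q1 =
     - (INF t\<in>{0<..<(1::real)}. ln (\<Sum>y\<in>Y. Q0 y powr t * Q1 y powr (1 - t)))"

definition binary_mech :: "('x \<Rightarrow> real) \<Rightarrow> ('x \<Rightarrow> real) \<Rightarrow> real \<Rightarrow> real \<Rightarrow> 'x \<Rightarrow> nat \<Rightarrow> real" where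
  "binary_mech P0 P1 \<tau> \<epsilon> x y =
     (let V = (if P0 x \<ge> \<tau> * P1 x then 0 else 1 :: nat) in
      if y = V then exp \<epsilon> / (exp \<epsilon> + 1)
      else if y = 1 - V then 1 / (exp \<epsilon> + 1) else 0)"

end

theory Submission
  imports Defs "HOL-Analysis.Convex"
begin

text \<open>Fix l \<in> (0,1) and put a = e^\<epsilon> - 1. The Chernoff coefficient
  \<Sum>y Q0(y)^l Q1(y)^(1-l) of a mechanism is a sum over its output columns v = W(\<cdot>,y) of the
  concave, 1-homogeneous map v \<mapsto> (P0\<cdot>v)^l (P1\<cdot>v)^(1-l), and \<epsilon>-LDP confines each column
  to a box [m, (1+a) m]. So the coefficient is at least \<Sum>x g x for every linear functional g that
  is dominated by this map at the vertices 1 + a\<cdot>1_T. We construct such a certificate g whose total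
  mass is the smaller Chernoff coefficient of the two binary mechanisms with threshold sets
  S = {P0 > P1} and S \<union> {P0 = P1}. At the vertices where T contains S and misses {P0 < P1}, or
  the reverse, domination follows from concavity along the tie direction; at every other vertex
  |P0(T) - P1(T)| stays a fixed gap below the total variation distance, and a second-order
  expansion in a shows that the curvature gain of order a^2 beats the O(a^3) errors once \<epsilon> is
  small. For each such \<epsilon> the better of the two thresholds is then optimal.\<close>

section \<open>Vertex values and their expansion in a\<close>

lemma powr_one_plus_taylor:
  fixes l x :: real
  assumes x: "\<bar>x\<bar> \<le> 1/2"
  obtains t where "1/2 \<le> 1 + t"
    and "(1 + x) powr l - 1 - l*x + l*(1-l)/2*x^2 = l*(l-1)*(l-2) * (1 + t) powr (l - 3) / 6 * x^3"
proof (cases "x = 0")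
  case True
  then show ?thesis using that[of 0] by simp
next
  case False
  define d where "d m t = (\<Prod>i<m. l - real i) * (1 + t) powr (l - real m)" for m :: nat and t :: real
  have d_deriv: "DERIV (d m) t :> d (Suc m) t" if "m < 3 \<and> -1/2 \<le> t \<and> t \<le> 1/2" for m t
  proof -
    have "0 < 1 + t" using that by auto
    then have "((\<lambda>t. (1 + t) powr (l - real m)) has_real_derivative
                 (l - real m) * (1 + t) powr (l - real m - 1)) (at t)"
      by (auto intro!: derivative_eq_intros)
    from DERIV_cmult[OF this, of "\<Prod>i<m. l - real i"] show ?thesis
      unfolding d_def by (simp add: algebra_simps)
  qed
  have "\<exists>t. (if x < 0 then x < t \<and> t < 0 else 0 < t \<and> t < x) \<and>
      (1 + x) powr l = (\<Sum>m<3. d m 0 / fact m * (x - 0)^m) + d 3 t / fact 3 * (x - 0)^3"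
  proof (rule Taylor[where a="-1/2" and b="1/2"])
    show "d 0 = (\<lambda>t. (1 + t) powr l)" unfolding d_def by simp
  qed (use d_deriv x False in \<open>auto simp: abs_le_iff\<close>)
  then obtain t where t: "if x < 0 then x < t \<and> t < 0 else 0 < t \<and> t < x"
    and taylor: "(1 + x) powr l = (\<Sum>m<3. d m 0 / fact m * (x - 0)^m) + d 3 t / fact 3 * (x - 0)^3"
    by blast
  show ?thesis
  proof (rule that)
    show "1/2 \<le> 1 + t" using t x by (auto split: if_splits simp: abs_le_iff)
    show "(1 + x) powr l - 1 - l*x + l*(1-l)/2*x^2 = l*(l-1)*(l-2) * (1 + t) powr (l - 3) / 6 * x^3"
      using taylor by (simp add: d_def eval_nat_numeral lessThan_Suc fact_numeral field_simps)
  qed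
qed

lemma powr_one_plus_taylor_bound:
  fixes l x :: real
  assumes l: "0 < l" "l < 1" and x: "\<bar>x\<bar> \<le> 1/2"
  shows "\<bar>(1 + x) powr l - 1 - l*x + l*(1-l)/2*x^2\<bar> \<le> 3*(l*(1-l))*\<bar>x\<bar>^3"
proof -
  obtain t where t: "1/2 \<le> 1 + t"
    and eq: "(1 + x) powr l - 1 - l*x + l*(1-l)/2*x^2 = l*(l-1)*(l-2) * (1 + t) powr (l - 3) / 6 * x^3"
    using powr_one_plus_taylor[OF x] by blast
  have "\<bar>(1 + x) powr l - 1 - l*x + l*(1-l)/2*x^2\<bar> = l*(1-l)*(2-l) * (1 + t) powr (l - 3) / 6 * \<bar>x\<bar>^3"
    unfolding eq using l by (simp add: abs_mult power_abs abs_mult_pos)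
  also have "\<dots> \<le> l*(1-l)*2 * 8 / 6 * \<bar>x\<bar>^3"
  proof -
    have "(1 + t) powr (l - 3) \<le> (1/2) powr (l - 3)"
      using t l by (intro powr_mono2') auto
    also have "\<dots> = 2 powr (3 - l)"
      by (simp add: powr_divide powr_minus_divide[symmetric])
    also have "\<dots> \<le> 2 powr 3"
      using l by (intro powr_mono) auto
    finally show ?thesis
      using l by (intro mult_right_mono divide_right_mono mult_mono) auto
  qed
  also have "\<dots> \<le> 3*(l*(1-l))*\<bar>x\<bar>^3"
    using l by (intro mult_right_mono) auto
  finally show ?thesis .
qed

text \<open>(P0\<cdot>v)^l (P1\<cdot>v)^(1-l) at the column v = 1 + a\<cdot>1_T, where p = P1(T) and q = P0(T);
  vertex_linear is its first-order part in a.\<close>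
definition vertex_value :: "real \<Rightarrow> real \<Rightarrow> real \<Rightarrow> real \<Rightarrow> real" where
  "vertex_value a l p q = (1 + a*q) powr l * (1 + a*p) powr (1-l)"

definition vertex_linear :: "real \<Rightarrow> real \<Rightarrow> real \<Rightarrow> real \<Rightarrow> real" where
  "vertex_linear a l p q = 1 + a*((1-l)*p + l*q)"

lemma vertex_value_eq_mult_powr:
  assumes "0 \<le> a" "0 \<le> p" "0 \<le> q"
  shows "vertex_value a l p q = (1 + a*p) * (1 + a*(q-p)/(1 + a*p)) powr l"
proof -
  define P where "P = 1 + a*p"
  have P: "0 < P" using assms by (simp add: P_def add_pos_nonneg)
  have "1 + a*q = P * (1 + a*(q-p)/P)" using P by (simp add: P_def field_simps)
  moreover have "0 \<le> 1 + a*(q-p)/P" using P assms by (simp add: P_def field_simps)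
  ultimately have "vertex_value a l p q = P powr l * (1 + a*(q-p)/P) powr l * P powr (1-l)"
    using P by (simp add: vertex_value_def powr_mult P_def[symmetric])
  also have "\<dots> = P * (1 + a*(q-p)/P) powr l"
    using P by (simp add: powr_add[symmetric])
  finally show ?thesis by (simp add: P_def)
qed

lemma scaled_taylor_remainder_bound:
  fixes l P x :: real
  assumes l: "0 < l" "l < 1" and P: "1 \<le> P" and Px: "\<bar>P*x\<bar> \<le> 1/2"
  shows "\<bar>P * ((1 + x) powr l - 1 - l*x + l*(1-l)/2*x^2)\<bar> \<le> 3*(l*(1-l))*\<bar>P*x\<bar>^3"
proof -
  have "\<bar>x\<bar> \<le> P*\<bar>x\<bar>" using P by (simp add: mult_le_cancel_right1)
  then have x: "\<bar>x\<bar> \<le> 1/2" using Px P by (simp add: abs_mult)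
  have "P*\<bar>x\<bar>^3 \<le> P^3*\<bar>x\<bar>^3"
    using P by (intro mult_right_mono) (auto simp: power_increasing[of 1 3 P, simplified])
  then have "P*(3*(l*(1-l))*\<bar>x\<bar>^3) \<le> 3*(l*(1-l))*\<bar>P*x\<bar>^3"
    using l P by (simp add: abs_mult power_mult_distrib mult.left_commute mult_left_mono)
  moreover have "\<bar>P * ((1 + x) powr l - 1 - l*x + l*(1-l)/2*x^2)\<bar> \<le> P*(3*(l*(1-l))*\<bar>x\<bar>^3)"
    using powr_one_plus_taylor_bound[OF l x] P by (simp add: abs_mult)
  ultimately show ?thesis by linarith
qed

lemma vertex_value_expansion:
  fixes l a p q :: real
  assumes l: "0 < l" "l < 1" and a: "0 \<le> a" "a \<le> 1/2"
    and p: "0 \<le> p" "p \<le> 1" and q: "0 \<le> q" "q \<le> 1"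
  shows "\<bar>vertex_value a l p q - vertex_linear a l p q + l*(1-l)/2*a^2*(q-p)^2\<bar>
           \<le> 4*(l*(1-l)*a^3)"
proof -
  define c where "c = l*(1-l)/2"
  define P where "P = 1 + a*p"
  define x where "x = a*(q-p)/P"
  define r where "r = (1 + x) powr l - 1 - l*x + c*x^2"
  have c: "0 \<le> c" using l by (simp add: c_def)
  have P: "1 \<le> P" using a p by (simp add: P_def)
  have Px: "P*x = a*(q-p)" using P by (simp add: x_def)
  have aqp: "\<bar>a*(q-p)\<bar> \<le> a" using a p q by (simp add: abs_mult mult_left_le)
  have "vertex_value a l p q = P * (1 + x) powr l"
    using vertex_value_eq_mult_powr[OF a(1) p(1) q(1), of l] by (simp add: P_def x_def)
  then have V: "vertex_value a l p q = P + l*(P*x) - c*(P*x)^2/P + P*r"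
    using P by (simp add: r_def field_simps power2_eq_square)
  have "\<bar>vertex_value a l p q - vertex_linear a l p q + c*a^2*(q-p)^2\<bar>
      = \<bar>c*(a*(q-p))^2*(1 - 1/P) + P*r\<bar>"
  proof -
    have "vertex_linear a l p q = P + l*(a*(q-p))" by (simp add: vertex_linear_def P_def algebra_simps)
    moreover have "c*a^2*(q-p)^2 = c*(a*(q-p))^2" by (simp add: power_mult_distrib)
    ultimately show ?thesis unfolding V Px by (simp only: right_diff_distrib) simp
  qed
  also have "\<dots> \<le> \<bar>c*(a*(q-p))^2*(1 - 1/P)\<bar> + \<bar>P*r\<bar>"
    by (rule abs_triangle_ineq)
  also have "\<bar>c*(a*(q-p))^2*(1 - 1/P)\<bar> \<le> c*a^2*a"
  proof -
    have "1 - 1/P = a*p/P" using P by (simp add: P_def field_simps)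
    also have "\<dots> \<le> a*p/1" using P a p by (intro divide_left_mono) auto
    also have "\<dots> \<le> a" using a p by (simp add: mult_left_le)
    finally have "0 \<le> 1 - 1/P" "1 - 1/P \<le> a" using P by auto
    moreover have "(a*(q-p))^2 \<le> a^2" using aqp by (metis abs_le_square_iff abs_of_nonneg a(1))
    ultimately show ?thesis using c by (simp add: abs_mult mult_mono mult_left_mono)
  qed
  also have "\<bar>P*r\<bar> \<le> 6*c*a^3"
  proof -
    have "\<bar>P*r\<bar> \<le> 6*c*\<bar>P*x\<bar>^3"
      using scaled_taylor_remainder_bound[OF l P, of x] Px aqp a by (simp add: r_def c_def)
    also have "\<dots> = 6*c*\<bar>a*(q-p)\<bar>^3" by (simp only: Px)
    also have "\<dots> \<le> 6*c*a^3" using aqp c by (intro mult_left_mono power_mono) auto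
    finally show ?thesis .
  qed
  also have "c*a^2*a + 6*c*a^3 \<le> 4*(l*(1-l)*a^3)"
    using l a by (simp add: c_def power3_eq_cube power2_eq_square)
  finally show ?thesis by (simp add: c_def)
qed

lemma vertex_linear_bounds:
  assumes "0 \<le> l" "l \<le> 1" "0 \<le> a" "0 \<le> p" "p \<le> 1" "0 \<le> q" "q \<le> 1"
  shows "1 \<le> vertex_linear a l p q" "vertex_linear a l p q \<le> 1 + a"
proof -
  have "(1-l)*p \<le> 1-l" "l*q \<le> l" using assms by (auto intro: mult_left_le)
  then have "0 \<le> (1-l)*p + l*q" "(1-l)*p + l*q \<le> 1" using assms by auto
  then show "1 \<le> vertex_linear a l p q" "vertex_linear a l p q \<le> 1 + a"
    using assms by (auto simp: vertex_linear_def mult_left_le)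
qed

text \<open>The tangent plane of (s, t) \<mapsto> t^l s^(1-l) along the ray t = k s.\<close>
definition geo_tangent :: "real \<Rightarrow> real \<Rightarrow> real \<Rightarrow> real \<Rightarrow> real" where
  "geo_tangent l k s t = (1-l) * k powr l * s + l * k powr (l-1) * t"

lemma geo_mean_le_geo_tangent:
  fixes l k s t :: real
  assumes l: "0 < l" "l < 1" and pos: "0 < k" "0 < s" "0 < t"
  shows "t powr l * s powr (1-l) \<le> geo_tangent l k s t"
proof -
  have "t powr l * s powr (1-l) = (k powr (l-1) * t) powr l * (k powr l * s) powr (1-l)"
  proof -
    have "k powr ((l-1)*l) * k powr (l*(1-l)) = 1"
      using pos by (simp add: powr_add[symmetric] algebra_simps)
    then show ?thesis
      using pos by (simp add: powr_mult powr_powr mult_ac)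
  qed
  also have "\<dots> \<le> l*(k powr (l-1) * t) + (1-l)*(k powr l * s)"
    using l pos by (intro Youngs_inequality_0) auto
  finally show ?thesis unfolding geo_tangent_def by (simp add: algebra_simps)
qed

lemma geo_tangent_at_ratio:
  fixes l s t :: real
  assumes "0 < s" "0 < t"
  shows "geo_tangent l (t/s) s t = t powr l * s powr (1-l)"
proof -
  have "(t/s) powr l * s = t powr l * s powr (1-l)"
    using assms by (simp add: powr_divide powr_diff field_simps)
  moreover have "(t/s) powr (l-1) * t = t powr l * s powr (1-l)"
    using assms by (simp add: powr_divide powr_diff field_simps powr_minus)
  ultimately show ?thesis
    unfolding geo_tangent_def by (simp add: mult.assoc) (simp add: algebra_simps)
qed

lemma geo_mean_concave:
  fixes l \<theta> s0 t0 s1 t1 :: real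
  assumes l: "0 < l" "l < 1" and \<theta>: "0 \<le> \<theta>" "\<theta> \<le> 1"
    and pos: "0 < s0" "0 < t0" "0 < s1" "0 < t1"
  shows "(1-\<theta>)*(t0 powr l * s0 powr (1-l)) + \<theta>*(t1 powr l * s1 powr (1-l))
          \<le> ((1-\<theta>)*t0 + \<theta>*t1) powr l * ((1-\<theta>)*s0 + \<theta>*s1) powr (1-l)"
proof -
  define s where "s = (1-\<theta>)*s0 + \<theta>*s1"
  define t where "t = (1-\<theta>)*t0 + \<theta>*t1"
  have "0 < s" "0 < t"
    unfolding s_def t_def using \<theta> pos
    by (cases "\<theta> = 1"; auto intro: add_pos_nonneg)+
  then have k: "0 < t/s" by simp
  have "(1-\<theta>)*(t0 powr l * s0 powr (1-l)) + \<theta>*(t1 powr l * s1 powr (1-l))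
      \<le> (1-\<theta>)*geo_tangent l (t/s) s0 t0 + \<theta>*geo_tangent l (t/s) s1 t1"
    using geo_mean_le_geo_tangent[OF l k pos(1,2)] geo_mean_le_geo_tangent[OF l k pos(3,4)] \<theta>
    by (intro add_mono mult_left_mono) auto
  also have "\<dots> = geo_tangent l (t/s) s t"
    unfolding s_def t_def geo_tangent_def by (simp add: algebra_simps)
  also have "\<dots> = t powr l * s powr (1-l)"
    using \<open>0 < s\<close> \<open>0 < t\<close> by (rule geo_tangent_at_ratio)
  finally show ?thesis unfolding s_def t_def .
qed

lemma vertex_value_concave:
  fixes l a \<theta> p0 q0 p1 q1 :: real
  assumes l: "0 < l" "l < 1" and \<theta>: "0 \<le> \<theta>" "\<theta> \<le> 1" and a: "0 \<le> a"
    and nonneg: "0 \<le> p0" "0 \<le> q0" "0 \<le> p1" "0 \<le> q1"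
  shows "(1-\<theta>)*vertex_value a l p0 q0 + \<theta>*vertex_value a l p1 q1
           \<le> vertex_value a l ((1-\<theta>)*p0 + \<theta>*p1) ((1-\<theta>)*q0 + \<theta>*q1)"
proof -
  have "1 + a*((1-\<theta>)*u0 + \<theta>*u1) = (1-\<theta>)*(1 + a*u0) + \<theta>*(1 + a*u1)" for u0 u1
    by (simp add: algebra_simps)
  then show ?thesis
    unfolding vertex_value_def
    by (simp only:) (rule geo_mean_concave[OF l \<theta>]; use a nonneg in \<open>auto intro: add_pos_nonneg\<close>)
qed

lemma vertex_value_ge_one:
  assumes "0 < l" "l < 1" "0 \<le> a" "0 \<le> p" "0 \<le> q"
  shows "1 \<le> vertex_value a l p q"
proof -
  have "1 \<le> (1 + a*q) powr l" "1 \<le> (1 + a*p) powr (1-l)"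
    using assms by (auto intro: ge_one_powr_ge_zero)
  then show ?thesis
    unfolding vertex_value_def by (metis mult_mono' zero_le_one mult_1)
qed

text \<open>The Chernoff coefficient of a binary mechanism whose threshold set T has P1(T) = p and
  P0(T) = q.\<close>
definition binary_coeff :: "real \<Rightarrow> real \<Rightarrow> real \<Rightarrow> real \<Rightarrow> real" where
  "binary_coeff a l p q = (vertex_value a l p q + vertex_value a l (1-p) (1-q)) / (2 + a)"

lemma binary_coeff_ge:
  assumes "0 < l" "l < 1" "0 \<le> a" "0 \<le> p" "p \<le> 1" "0 \<le> q" "q \<le> 1"
  shows "2 / (2 + a) \<le> binary_coeff a l p q"
  using vertex_value_ge_one[of l a p q] vertex_value_ge_one[of l a "1-p" "1-q"] assms
  unfolding binary_coeff_def by (intro divide_right_mono) auto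

lemma binary_coeff_expansion:
  fixes l a p q :: real
  assumes l: "0 < l" "l < 1" and a: "0 \<le> a" "a \<le> 1/2"
    and p: "0 \<le> p" "p \<le> 1" and q: "0 \<le> q" "q \<le> 1"
  shows "\<bar>binary_coeff a l p q - 1 + l*(1-l)/2*a^2*(q-p)^2\<bar> \<le> 9*(l*(1-l)*a^3)"
proof -
  define c where "c = l*(1-l)/2"
  define e where "e = l*(1-l)*a^3"
  define r where "r p q = vertex_value a l p q - vertex_linear a l p q + c*a^2*(q-p)^2" for p q
  have r: "\<bar>r p q\<bar> \<le> 4*e" "\<bar>r (1-p) (1-q)\<bar> \<le> 4*e"
    unfolding r_def c_def e_def
    using vertex_value_expansion[OF l a p q] vertex_value_expansion[of l a "1-p" "1-q"] l a p q
    by simp_all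
  have "0 \<le> c*a^2*(q-p)^2*a" using l a by (simp add: c_def)
  moreover have "c*a^2*(q-p)^2*a \<le> e/2"
  proof -
    have "(q-p)^2 \<le> 1" using abs_le_square_iff[of "q-p" 1] p q by (simp add: abs_le_iff)
    then have "c*a^3*(q-p)^2 \<le> c*a^3" using l a by (simp add: c_def mult_left_le)
    then show ?thesis by (simp add: c_def e_def power3_eq_cube power2_eq_square algebra_simps)
  qed
  moreover have "(binary_coeff a l p q - 1 + c*a^2*(q-p)^2) * (2 + a)
      = c*a^2*(q-p)^2*a + r p q + r (1-p) (1-q)"
    using a by (simp add: binary_coeff_def r_def vertex_linear_def power2_commute field_simps)
  ultimately have "\<bar>(binary_coeff a l p q - 1 + c*a^2*(q-p)^2) * (2 + a)\<bar> \<le> 9*e"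
    using r by (simp only: abs_le_iff) linarith
  moreover have "\<bar>binary_coeff a l p q - 1 + c*a^2*(q-p)^2\<bar>
      \<le> \<bar>(binary_coeff a l p q - 1 + c*a^2*(q-p)^2) * (2 + a)\<bar>"
    using a by (simp add: abs_mult mult_le_cancel_left1)
  ultimately show ?thesis by (simp add: c_def e_def)
qed

section \<open>A dual certificate at the binary vertices\<close>

text \<open>pS and pS + \<delta> are the P1- and P0-masses of the set {P0 > P1}, z is the mass of the ties
  {P0 = P1}. L p q t is the value of the certificate at the vertex 1 + a\<cdot>1_T with p = P1(T),
  q = P0(T) and t = P1(T \<inter> {P0 = P1}); kd and kw are fixed by requiring L = V at the vertices of
  the two binary mechanisms, T = {P0 > P1} and T = {P0 \<ge> P1}.\<close>
locale dual_certificate =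
  fixes l a pS \<delta> z :: real
  assumes l: "0 < l" "l < 1" and a: "0 < a" "a \<le> 1/2" and \<delta>: "0 < \<delta>" and z: "0 \<le> z" "z < 1"
    and pS: "0 \<le> pS" "pS + \<delta> + z \<le> 1"
begin

abbreviation "qS \<equiv> pS + \<delta>"

abbreviation "V \<equiv> vertex_value a l"

abbreviation "\<sigma> \<equiv> vertex_linear a l"

definition "G = min (binary_coeff a l pS qS) (binary_coeff a l (pS+z) (qS+z))"

definition "kw = (V (pS+z) (qS+z) - V pS qS - a*z*G) / (a*z*(1-z))"

definition "kd = (V pS qS - G * \<sigma> pS qS + kw*a*z*pS) / (a*\<delta>)"

definition "L p q t = G * \<sigma> p q + kd*a*(q-p) + kw*a*(t - z*p)"

lemma L_affine:
  "L ((1-\<theta>)*p0 + \<theta>*p1) ((1-\<theta>)*q0 + \<theta>*q1) ((1-\<theta>)*t0 + \<theta>*t1)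
     = (1-\<theta>)*L p0 q0 t0 + \<theta>*L p1 q1 t1"
  unfolding L_def vertex_linear_def by (simp add: algebra_simps)

lemma L_complement: "L p q t + L (1-p) (1-q) (z-t) = (2+a)*G"
  unfolding L_def vertex_linear_def by (simp add: algebra_simps)

lemma L_at_pos: "L pS qS 0 = V pS qS"
proof -
  have "kd*a*\<delta> = V pS qS - G * \<sigma> pS qS + kw*a*z*pS" unfolding kd_def using a \<delta> by simp
  then show ?thesis unfolding L_def by (simp add: algebra_simps)
qed

lemma L_at_pos_tie: "L (pS+z) (qS+z) z = V (pS+z) (qS+z)"
proof (cases "z = 0")
  case True
  then show ?thesis using L_at_pos by simp
next
  case False
  have "kw*(a*z*(1-z)) = V (pS+z) (qS+z) - V pS qS - a*z*G"
    unfolding kw_def using False a z by simp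
  moreover have "L (pS+z) (qS+z) z = L pS qS 0 + a*z*G + kw*(a*z*(1-z))"
    unfolding L_def vertex_linear_def by (simp add: algebra_simps)
  ultimately show ?thesis using L_at_pos by simp
qed

lemma L_at_neg_tie: "L (1-pS) (1-qS) z \<le> V (1-pS) (1-qS)"
proof -
  have "(2+a)*G \<le> (2+a)*binary_coeff a l pS qS"
    using a by (intro mult_left_mono) (auto simp: G_def)
  also have "\<dots> = V pS qS + V (1-pS) (1-qS)"
    using a by (simp add: binary_coeff_def)
  finally show ?thesis using L_complement[of pS qS 0] L_at_pos by simp
qed

lemma L_at_neg: "L (1-pS-z) (1-qS-z) 0 \<le> V (1-pS-z) (1-qS-z)"
proof -
  have "(2+a)*G \<le> (2+a)*binary_coeff a l (pS+z) (qS+z)"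
    using a by (intro mult_left_mono) (auto simp: G_def)
  also have "\<dots> = V (pS+z) (qS+z) + V (1-(pS+z)) (1-(qS+z))"
    using a by (simp add: binary_coeff_def)
  finally show ?thesis using L_complement[of "pS+z" "qS+z" z] L_at_pos_tie by (simp add: algebra_simps)
qed

lemma L_le_V_on_tie_segment:
  assumes "0 \<le> p" "0 \<le> q" "0 \<le> t" "t \<le> z"
    and "L p q 0 \<le> V p q" and "L (p+z) (q+z) z \<le> V (p+z) (q+z)"
  shows "L (p+t) (q+t) t \<le> V (p+t) (q+t)"
proof (cases "z = 0")
  case True
  then show ?thesis using assms by simp
next
  case False
  define \<theta> where "\<theta> = t/z"
  have \<theta>: "0 \<le> \<theta>" "\<theta> \<le> 1" using assms z False by (auto simp: \<theta>_def)
  have t: "t = \<theta>*z" using False by (simp add: \<theta>_def)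
  have conv: "p + t = (1-\<theta>)*p + \<theta>*(p+z)" "q + t = (1-\<theta>)*q + \<theta>*(q+z)" "t = (1-\<theta>)*0 + \<theta>*z"
    using t by (auto simp: algebra_simps)
  have "L (p+t) (q+t) t = (1-\<theta>)*L p q 0 + \<theta>*L (p+z) (q+z) z"
    unfolding conv(1,2) by (subst conv(3)) (rule L_affine)
  also have "\<dots> \<le> (1-\<theta>)*V p q + \<theta>*V (p+z) (q+z)"
    using assms \<theta> by (intro add_mono mult_left_mono) auto
  also have "\<dots> \<le> V (p+t) (q+t)"
    unfolding conv(1,2) using assms a z by (intro vertex_value_concave[OF l \<theta>]) auto
  finally show ?thesis .
qed

lemma L_le_V_pos_edge:
  assumes "0 \<le> t" "t \<le> z"
  shows "L (pS+t) (qS+t) t \<le> V (pS+t) (qS+t)"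
  using L_le_V_on_tie_segment[of pS qS t] assms pS \<delta> L_at_pos L_at_pos_tie by simp

lemma L_le_V_neg_edge:
  assumes "0 \<le> t" "t \<le> z"
  shows "L (1-pS-z+t) (1-qS-z+t) t \<le> V (1-pS-z+t) (1-qS-z+t)"
  using L_le_V_on_tie_segment[of "1-pS-z" "1-qS-z" t] assms pS \<delta> L_at_neg L_at_neg_tie
  by (simp add: algebra_simps)

lemma G_expansion: "\<bar>G - 1 + l*(1-l)/2*a^2*\<delta>^2\<bar> \<le> 9*(l*(1-l)*a^3)"
proof -
  have "\<bar>binary_coeff a l p (p+\<delta>) - 1 + l*(1-l)/2*a^2*\<delta>^2\<bar> \<le> 9*(l*(1-l)*a^3)"
    if "0 \<le> p" "p + \<delta> \<le> 1" for p
    using binary_coeff_expansion[of l a p "p+\<delta>"] l a \<delta> that by simp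
  moreover have "G = min (binary_coeff a l pS (pS+\<delta>)) (binary_coeff a l (pS+z) (pS+z+\<delta>))"
    by (simp add: G_def ac_simps)
  ultimately show ?thesis
    using pS z \<delta> by (auto simp: min_def)
qed

lemma tie_slope_bound: "\<bar>V (pS+z) (qS+z) - V pS qS - a*z*G\<bar> \<le> 13*(l*(1-l)*a^3)"
proof -
  define c where "c = l*(1-l)/2"
  define e where "e = l*(1-l)*a^3"
  define r where "r p q = V p q - \<sigma> p q + c*a^2*(q-p)^2" for p q
  have r: "\<bar>r pS qS\<bar> \<le> 4*e" "\<bar>r (pS+z) (qS+z)\<bar> \<le> 4*e"
    unfolding r_def c_def e_def
    using vertex_value_expansion[OF l _ a(2), of pS qS]
      vertex_value_expansion[OF l _ a(2), of "pS+z" "qS+z"] a pS z \<delta>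
    by simp_all
  have G: "\<bar>G - 1 + c*a^2*\<delta>^2\<bar> \<le> 9*e" using G_expansion by (simp add: c_def e_def)
  have "0 \<le> a*z*(c*a^2*\<delta>^2)" "a*z*(c*a^2*\<delta>^2) \<le> e/2"
  proof -
    have "\<delta>^2 \<le> 1" "z \<le> 1" using pS \<delta> z by (auto simp: power_le_one)
    then have "c*a^3*(z*\<delta>^2) \<le> c*a^3" using l a z by (simp add: c_def mult_le_one mult_left_le)
    then show "a*z*(c*a^2*\<delta>^2) \<le> e/2"
      by (simp add: c_def e_def power3_eq_cube power2_eq_square algebra_simps)
    show "0 \<le> a*z*(c*a^2*\<delta>^2)" using l a z by (simp add: c_def)
  qed
  moreover have "\<bar>a*z*(G - 1 + c*a^2*\<delta>^2)\<bar> \<le> 1/2*(9*e)"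
  proof -
    have "a*z \<le> 1/2" using mult_left_le[of z a] a z by linarith
    then show ?thesis using G a z unfolding abs_mult by (intro mult_mono) auto
  qed
  moreover have "V (pS+z) (qS+z) - V pS qS - a*z*G
      = r (pS+z) (qS+z) - r pS qS + a*z*(c*a^2*\<delta>^2) - a*z*(G - 1 + c*a^2*\<delta>^2)"
    unfolding r_def vertex_linear_def by (simp add: algebra_simps)
  ultimately have "\<bar>V (pS+z) (qS+z) - V pS qS - a*z*G\<bar> \<le> 13*e"
    using r by (simp only: abs_le_iff) linarith
  then show ?thesis by (simp add: e_def)
qed

lemma kw_bound:
  assumes "\<bar>u\<bar> \<le> z"
  shows "(1-z)*\<bar>kw*a*u\<bar> \<le> 13*(l*(1-l)*a^3)"
proof (cases "z = 0")
  case True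
  then show ?thesis using assms l a by simp
next
  case False
  define X where "X = V (pS+z) (qS+z) - V pS qS - a*z*G"
  have "kw*a*u*(1-z) = X*(u/z)"
    using False a z by (simp add: kw_def X_def field_simps)
  then have "(1-z)*\<bar>kw*a*u\<bar> = \<bar>X\<bar>*(\<bar>u\<bar>/z)"
    using False z by (metis abs_divide abs_mult abs_of_pos abs_of_nonneg diff_gt_0_iff_gt mult.commute)
  also have "\<dots> \<le> \<bar>X\<bar>*1"
    using assms z False by (intro mult_left_mono) (auto simp: divide_le_eq_1)
  finally show ?thesis using tie_slope_bound by (simp add: X_def)
qed

lemma pos_vertex_defect_bound: "\<bar>V pS qS - G * \<sigma> pS qS\<bar> \<le> 18*(l*(1-l)*a^3)"
proof -
  define c where "c = l*(1-l)/2"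
  define e where "e = l*(1-l)*a^3"
  define EG where "EG = G - 1 + c*a^2*\<delta>^2"
  have r: "\<bar>V pS qS - \<sigma> pS qS + c*a^2*\<delta>^2\<bar> \<le> 4*e"
    using vertex_value_expansion[OF l _ a(2), of pS qS] a pS z \<delta> by (simp add: c_def e_def)
  have EG: "\<bar>EG\<bar> \<le> 9*e" using G_expansion by (simp add: EG_def c_def e_def)
  have \<sigma>: "1 \<le> \<sigma> pS qS" "\<sigma> pS qS \<le> 1 + a"
    using vertex_linear_bounds[of l a pS qS] l a pS z \<delta> by auto
  have "0 \<le> c*a^2*\<delta>^2*(\<sigma> pS qS - 1)" "c*a^2*\<delta>^2*(\<sigma> pS qS - 1) \<le> e/2"
  proof -
    have "\<delta>^2 \<le> 1" using pS \<delta> z by (auto simp: power_le_one)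
    then have "c*a^2*\<delta>^2*(\<sigma> pS qS - 1) \<le> c*a^2*1*a"
      using \<sigma> l by (intro mult_mono) (auto simp: c_def)
    then show "c*a^2*\<delta>^2*(\<sigma> pS qS - 1) \<le> e/2"
      by (simp add: c_def e_def power3_eq_cube power2_eq_square algebra_simps)
    show "0 \<le> c*a^2*\<delta>^2*(\<sigma> pS qS - 1)" using \<sigma> l by (simp add: c_def)
  qed
  moreover have "\<bar>\<sigma> pS qS * EG\<bar> \<le> 3/2*(9*e)"
    using \<sigma> a EG unfolding abs_mult by (intro mult_mono) auto
  moreover have "V pS qS - G * \<sigma> pS qS
      = c*a^2*\<delta>^2*(\<sigma> pS qS - 1) + (V pS qS - \<sigma> pS qS + c*a^2*\<delta>^2) - \<sigma> pS qS * EG"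
    unfolding EG_def by (simp add: algebra_simps)
  ultimately have "\<bar>V pS qS - G * \<sigma> pS qS\<bar> \<le> 18*e"
    using r by (simp only: abs_le_iff) linarith
  then show ?thesis by (simp add: e_def)
qed

lemma kd_bound: "(1-z)*\<bar>kd*a*\<delta>\<bar> \<le> 31*(l*(1-l)*a^3)"
proof -
  have "kd*a*\<delta> = (V pS qS - G * \<sigma> pS qS) - kw*a*(0 - z*pS)"
    unfolding kd_def using a \<delta> by simp
  then have tri: "\<bar>kd*a*\<delta>\<bar> \<le> \<bar>V pS qS - G * \<sigma> pS qS\<bar> + \<bar>kw*a*(0 - z*pS)\<bar>"
    by (simp only: abs_triangle_ineq4)
  have "(1-z)*\<bar>kd*a*\<delta>\<bar> \<le> (1-z)*\<bar>V pS qS - G * \<sigma> pS qS\<bar> + (1-z)*\<bar>kw*a*(0 - z*pS)\<bar>"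
    using mult_left_mono[OF tri, of "1-z"] z by (simp add: distrib_left)
  moreover have "(1-z)*\<bar>V pS qS - G * \<sigma> pS qS\<bar> \<le> \<bar>V pS qS - G * \<sigma> pS qS\<bar>"
    using z by (intro mult_left_le_one_le) auto
  moreover have "(1-z)*\<bar>kw*a*(0 - z*pS)\<bar> \<le> 13*(l*(1-l)*a^3)"
    using pS z \<delta> by (intro kw_bound) (auto simp: abs_mult mult_left_le)
  ultimately show ?thesis using pos_vertex_defect_bound by linarith
qed

lemma V_minus_L_lower_bound:
  assumes p: "0 \<le> p" "p \<le> 1" and q: "0 \<le> q" "q \<le> 1" and k: "k \<le> \<delta>^2 - (q-p)^2"
  shows "l*(1-l)/2*a^2*k - 35/2*(l*(1-l)*a^3) - \<bar>kd*a*(q-p)\<bar> - \<bar>kw*a*(t - z*p)\<bar> \<le> V p q - L p q t"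
proof -
  define c where "c = l*(1-l)/2"
  define e where "e = l*(1-l)*a^3"
  have c: "0 \<le> c" using l by (simp add: c_def)
  have r: "\<bar>V p q - \<sigma> p q + c*a^2*(q-p)^2\<bar> \<le> 4*e"
    using vertex_value_expansion[OF l _ a(2) p q] a by (simp add: c_def e_def)
  have G: "\<bar>G - 1 + c*a^2*\<delta>^2\<bar> \<le> 9*e" using G_expansion by (simp add: c_def e_def)
  have \<sigma>: "1 \<le> \<sigma> p q" "\<sigma> p q \<le> 1 + a"
    using vertex_linear_bounds[of l a p q] l a p q by auto
  have "c*a^2*k \<le> c*a^2*\<delta>^2*\<sigma> p q - c*a^2*(q-p)^2"
  proof -
    have "c*a^2*\<delta>^2 \<le> c*a^2*\<delta>^2*\<sigma> p q" using mult_left_mono[OF \<sigma>(1), of "c*a^2*\<delta>^2"] c by simp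
    moreover have "c*a^2*k \<le> c*a^2*(\<delta>^2 - (q-p)^2)" using k c by (simp add: mult_left_mono)
    ultimately show ?thesis by (simp add: algebra_simps)
  qed
  moreover have "\<bar>\<sigma> p q * (G - 1 + c*a^2*\<delta>^2)\<bar> \<le> 3/2*(9*e)"
    using \<sigma> a G unfolding abs_mult by (intro mult_mono) auto
  moreover have "V p q - L p q t = (c*a^2*\<delta>^2*\<sigma> p q - c*a^2*(q-p)^2)
      + (V p q - \<sigma> p q + c*a^2*(q-p)^2) - \<sigma> p q * (G - 1 + c*a^2*\<delta>^2)
      - kd*a*(q-p) - kw*a*(t - z*p)"
    unfolding L_def by (simp add: algebra_simps)
  ultimately have "c*a^2*k - 35/2*e - \<bar>kd*a*(q-p)\<bar> - \<bar>kw*a*(t - z*p)\<bar> \<le> V p q - L p q t"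
    using r by (simp only: abs_le_iff) linarith
  then show ?thesis by (simp add: c_def e_def)
qed

lemma L_le_V_interior:
  assumes p: "0 \<le> p" "p \<le> 1" and q: "0 \<le> q" "q \<le> 1"
    and t: "\<bar>t - z*p\<bar> \<le> z" and k: "k \<le> \<delta>^2 - (q-p)^2" and ak: "a*200 \<le> k*(1-z)"
  shows "L p q t \<le> V p q"
proof -
  define c where "c = l*(1-l)/2"
  define e where "e = l*(1-l)*a^3"
  have c: "0 \<le> c" and e: "0 \<le> e" using l a by (auto simp: c_def e_def)
  have "0 < k*(1-z)" using ak a by linarith
  then have "0 < k" using z by (simp add: zero_less_mult_iff)
  then have "\<bar>q-p\<bar>^2 \<le> \<delta>^2" using k by simp
  then have qp: "\<bar>q - p\<bar> \<le> \<delta>" using abs_le_square_iff[of "q-p" \<delta>] \<delta> by simp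
  have "(1-z)*(c*a^2*k - 35/2*e - \<bar>kd*a*(q-p)\<bar> - \<bar>kw*a*(t - z*p)\<bar>) \<le> (1-z)*(V p q - L p q t)"
    using V_minus_L_lower_bound[OF p q k, of t] z by (intro mult_left_mono) (auto simp: c_def e_def)
  then have "(1-z)*(c*a^2*k) - (1-z)*(35/2*e) - (1-z)*\<bar>kd*a*(q-p)\<bar> - (1-z)*\<bar>kw*a*(t - z*p)\<bar>
      \<le> (1-z)*(V p q - L p q t)"
    by (simp add: algebra_simps)
  moreover have "100*e \<le> (1-z)*(c*a^2*k)"
  proof -
    have "100*e = c*a^2*(a*200)" by (simp add: c_def e_def power3_eq_cube power2_eq_square)
    also have "\<dots> \<le> c*a^2*(k*(1-z))" using ak c by (intro mult_left_mono) auto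
    also have "\<dots> = (1-z)*(c*a^2*k)" by (metis mult.commute mult.assoc)
    finally show ?thesis .
  qed
  moreover have "(1-z)*(35/2*e) \<le> 35/2*e"
    using z e by (intro mult_left_le_one_le) auto
  moreover have "(1-z)*\<bar>kd*a*(q-p)\<bar> \<le> 31*e"
  proof -
    have "(1-z)*\<bar>kd*a*(q-p)\<bar> \<le> (1-z)*\<bar>kd*a*\<delta>\<bar>"
      using qp \<delta> z a by (intro mult_left_mono) (auto simp: abs_mult mult_left_mono)
    then show ?thesis using kd_bound by (simp add: e_def)
  qed
  moreover have "(1-z)*\<bar>kw*a*(t - z*p)\<bar> \<le> 13*e"
    using kw_bound[OF t] by (simp add: e_def)
  ultimately have "0 \<le> (1-z)*(V p q - L p q t)" using e by linarith
  then show ?thesis using z by (simp add: zero_le_mult_iff)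
qed

end

section \<open>Chernoff coefficients of LDP mechanisms\<close>

definition chernoff_coeff :: "nat set \<Rightarrow> (nat \<Rightarrow> real) \<Rightarrow> (nat \<Rightarrow> real) \<Rightarrow> real \<Rightarrow> real" where
  "chernoff_coeff Y Q0 Q1 t = (\<Sum>y\<in>Y. Q0 y powr t * Q1 y powr (1 - t))"

lemma chernoff_info_le_max:
  assumes c: "0 < c"
    and lower: "\<And>t. t \<in> {0<..<1} \<Longrightarrow> c \<le> chernoff_coeff Y1 A0 A1 t \<and> c \<le> chernoff_coeff Y2 B0 B1 t"
    and min_le: "\<And>t. t \<in> {0<..<1} \<Longrightarrow>
                   min (chernoff_coeff Y1 A0 A1 t) (chernoff_coeff Y2 B0 B1 t) \<le> chernoff_coeff Y Q0 Q1 t"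
  shows "chernoff_info Y Q0 Q1 \<le> max (chernoff_info Y1 A0 A1) (chernoff_info Y2 B0 B1)"
proof -
  let ?I = "\<lambda>Y Q0 Q1. INF t\<in>{0<..<1::real}. ln (chernoff_coeff Y Q0 Q1 t)"
  have bdd: "bdd_below ((\<lambda>t. ln (chernoff_coeff Y1 A0 A1 t)) ` {0<..<1})"
            "bdd_below ((\<lambda>t. ln (chernoff_coeff Y2 B0 B1 t)) ` {0<..<1})"
    using lower c by (auto intro!: bdd_belowI2[where m = "ln c"] ln_mono)
  have "min (?I Y1 A0 A1) (?I Y2 B0 B1) \<le> ln (chernoff_coeff Y Q0 Q1 t)" if t: "t \<in> {0<..<1}" for t
  proof -
    have "min (?I Y1 A0 A1) (?I Y2 B0 B1)
        \<le> min (ln (chernoff_coeff Y1 A0 A1 t)) (ln (chernoff_coeff Y2 B0 B1 t))"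
      using cINF_lower[OF bdd(1) t] cINF_lower[OF bdd(2) t] by linarith
    also have "\<dots> = ln (min (chernoff_coeff Y1 A0 A1 t) (chernoff_coeff Y2 B0 B1 t))"
      using lower[OF t] c by (simp add: min_def)
    also have "\<dots> \<le> ln (chernoff_coeff Y Q0 Q1 t)"
      using lower[OF t] min_le[OF t] c by (intro ln_mono) (auto simp: min_def)
    finally show ?thesis .
  qed
  then have "min (?I Y1 A0 A1) (?I Y2 B0 B1) \<le> ?I Y Q0 Q1"
    by (intro cINF_greatest) auto
  then show ?thesis
    unfolding chernoff_info_def chernoff_coeff_def by linarith
qed

lemma chernoff_coeff_self:
  assumes "\<And>y. y \<in> Y \<Longrightarrow> 0 \<le> Q y"
  shows "chernoff_coeff Y Q Q t = sum Q Y"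
  unfolding chernoff_coeff_def
proof (rule sum.cong)
  fix y assume "y \<in> Y"
  then show "Q y powr t * Q y powr (1 - t) = Q y"
    using assms[of y] by (cases "Q y = 0") (simp_all add: powr_add[symmetric])
qed simp

lemma is_distr_sum_bounds:
  assumes "is_distr P"
  shows "0 \<le> sum P A" "sum P A \<le> 1"
proof -
  have "sum P A \<le> sum P UNIV" using assms by (intro sum_mono2) (auto simp: is_distr_def)
  then show "0 \<le> sum P A" "sum P A \<le> 1"
    using assms by (auto simp: is_distr_def intro: sum_nonneg)
qed

lemma out_distr_distr:
  assumes W: "is_mechanism k W" and P: "is_distr P"
  shows "sum (out_distr P W) {..<k} = 1" "y \<in> {..<k} \<Longrightarrow> 0 \<le> out_distr P W y"
proof -
  have "sum (out_distr P W) {..<k} = (\<Sum>x\<in>UNIV. P x * (\<Sum>y\<in>{..<k}. W x y))"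
    unfolding out_distr_def by (simp add: sum_distrib_left sum.swap[of _ "{..<k}"])
  then show "sum (out_distr P W) {..<k} = 1"
    using W P unfolding is_mechanism_def is_distr_def by simp
  show "y \<in> {..<k} \<Longrightarrow> 0 \<le> out_distr P W y"
    using W P unfolding is_mechanism_def is_distr_def out_distr_def by (auto intro!: sum_nonneg)
qed

lemma chernoff_coeff_same_distr:
  assumes "is_distr P" "is_mechanism k W"
  shows "chernoff_coeff {..<k} (out_distr P W) (out_distr P W) l = 1"
proof -
  have "chernoff_coeff {..<k} (out_distr P W) (out_distr P W) l = sum (out_distr P W) {..<k}"
    by (rule chernoff_coeff_self) (use out_distr_distr(2)[OF assms(2,1)] in auto)
  then show ?thesis using out_distr_distr(1)[OF assms(2,1)] by simp
qed

lemma sum_mult_one_plus_of_bool: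
  fixes f :: "'x::finite \<Rightarrow> real"
  shows "(\<Sum>x\<in>UNIV. f x * (1 + a * of_bool (x \<in> T))) = sum f UNIV + a * sum f T"
proof -
  have "(\<Sum>x\<in>UNIV. f x * of_bool (x \<in> T)) = sum f T"
    by (simp add: sum.inter_restrict[symmetric] of_bool_def if_distrib cong: if_cong)
  then show ?thesis
    by (simp add: algebra_simps sum.distrib sum_distrib_left[symmetric])
qed

lemma sum_mult_le_at_sign_vertex:
  fixes f v :: "'x::finite \<Rightarrow> real"
  assumes "\<And>x. m \<le> v x" "\<And>x. v x \<le> (1 + a) * m"
  shows "m * (\<Sum>x\<in>UNIV. f x * (1 + a * of_bool (f x < 0))) \<le> (\<Sum>x\<in>UNIV. f x * v x)"
  unfolding sum_distrib_left
proof (rule sum_mono)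
  fix x
  show "m * (f x * (1 + a * of_bool (f x < 0))) \<le> f x * v x"
  proof (cases "f x < 0")
    case True
    then show ?thesis
      using mult_left_mono_neg[OF assms(2)[of x], of "f x"] by (simp add: mult_ac)
  next
    case False
    then show ?thesis
      using mult_left_mono[OF assms(1)[of x], of "f x"] by (simp add: mult_ac)
  qed
qed

lemma sum_geo_tangent_weights:
  fixes P0 P1 w :: "'x::finite \<Rightarrow> real"
  shows "(\<Sum>x\<in>UNIV. ((1-l) * k powr l * P1 x + l * k powr (l-1) * P0 x) * w x)
           = geo_tangent l k (\<Sum>x\<in>UNIV. P1 x * w x) (\<Sum>x\<in>UNIV. P0 x * w x)"
proof -
  have "((1-l) * k powr l * P1 x + l * k powr (l-1) * P0 x) * w x
      = ((1-l) * k powr l) * (P1 x * w x) + (l * k powr (l-1)) * (P0 x * w x)" for x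
    by (simp add: algebra_simps)
  then show ?thesis
    by (simp add: geo_tangent_def sum.distrib sum_distrib_left[symmetric])
qed

lemma LDP_column_cases:
  fixes v :: "'x::finite \<Rightarrow> real"
  assumes "\<And>x. 0 \<le> v x" "\<And>x x'. v x \<le> (1 + a) * v x'"
  obtains "\<And>x. v x = 0" | m where "0 < m" "\<And>x. m \<le> v x" "\<And>x. v x \<le> (1 + a) * m"
proof (cases "\<exists>x0. v x0 = 0")
  case True
  then show ?thesis using assms that(1) by (metis mult_zero_right order_antisym)
next
  case False
  have "Min (range v) \<in> range v" by (rule Min_in) auto
  then obtain x0 where x0: "Min (range v) = v x0" by (rule rangeE)
  have "Min (range v) \<le> v x" for x by simp
  then have min: "v x0 \<le> v x" for x unfolding x0 .
  show ?thesis
  proof (rule that(2))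
    show "0 < v x0" using assms(1)[of x0] False by (auto simp: less_le)
  qed (use min assms(2) in auto)
qed

text \<open>The map v \<mapsto> (P0 \<cdot> v)^l (P1 \<cdot> v)^(1-l) is concave and 1-homogeneous, and the columns
  between m and (1+a) m form a box whose sign-adapted vertices are m (1 + a \<cdot> 1_T). So a linear
  functional g dominated at these vertices is dominated at v: compare g with the tangent plane h
  at v, and test h - g at the vertex where h - g is negative.\<close>

lemma sum_le_geo_mean_if_vertices:
  fixes g P0 P1 v :: "'x::finite \<Rightarrow> real"
  assumes P0: "is_distr P0" and P1: "is_distr P1" and l: "0 < l" "l < 1" and a: "0 \<le> a"
    and vertex: "\<And>T. (\<Sum>x\<in>UNIV. g x * (1 + a * of_bool (x \<in> T)))
                       \<le> vertex_value a l (sum P1 T) (sum P0 T)"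
    and m: "0 < m" "\<And>x. m \<le> v x" "\<And>x. v x \<le> (1 + a) * m"
  shows "(\<Sum>x\<in>UNIV. g x * v x) \<le> (\<Sum>x\<in>UNIV. P0 x * v x) powr l * (\<Sum>x\<in>UNIV. P1 x * v x) powr (1-l)"
proof -
  define s where "s = (\<Sum>x\<in>UNIV. P1 x * v x)"
  define t where "t = (\<Sum>x\<in>UNIV. P0 x * v x)"
  have "(\<Sum>x\<in>UNIV. P x * m) \<le> (\<Sum>x\<in>UNIV. P x * v x)" if "is_distr P" for P
    using that m by (intro sum_mono mult_left_mono) (auto simp: is_distr_def)
  then have "m \<le> s" "m \<le> t"
    using P0 P1 unfolding s_def t_def by (auto simp: is_distr_def sum_distrib_right[symmetric])
  then have st: "0 < s" "0 < t" using m by linarith+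
  define k where "k = t/s"
  have k: "0 < k" using st by (simp add: k_def)
  define h where "h x = (1-l) * k powr l * P1 x + l * k powr (l-1) * P0 x" for x
  define T where "T = {x. h x - g x < 0}"
  have "0 \<le> (\<Sum>x\<in>UNIV. (h x - g x) * (1 + a * of_bool (x \<in> T)))"
  proof -
    have "vertex_value a l (sum P1 T) (sum P0 T) \<le> geo_tangent l k (1 + a * sum P1 T) (1 + a * sum P0 T)"
      unfolding vertex_value_def using is_distr_sum_bounds[OF P0] is_distr_sum_bounds[OF P1] a
      by (intro geo_mean_le_geo_tangent[OF l k]) (auto intro: add_pos_nonneg)
    also have "\<dots> = (\<Sum>x\<in>UNIV. h x * (1 + a * of_bool (x \<in> T)))"
      using P0 P1 unfolding h_def sum_geo_tangent_weights
      by (simp add: sum_mult_one_plus_of_bool is_distr_def)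
    finally show ?thesis
      using vertex[of T] by (simp add: left_diff_distrib sum_subtractf)
  qed
  also have "m * \<dots> \<le> (\<Sum>x\<in>UNIV. (h x - g x) * v x)"
    using sum_mult_le_at_sign_vertex[of m v a "\<lambda>x. h x - g x", OF m(2,3)] by (simp add: T_def)
  finally have "(\<Sum>x\<in>UNIV. g x * v x) \<le> (\<Sum>x\<in>UNIV. h x * v x)"
    using m(1) by (simp add: left_diff_distrib sum_subtractf zero_le_mult_iff)
  also have "\<dots> = t powr l * s powr (1-l)"
    unfolding h_def sum_geo_tangent_weights s_def[symmetric] t_def[symmetric] k_def
    using st by (rule geo_tangent_at_ratio)
  finally show ?thesis unfolding s_def t_def .
qed

lemma chernoff_coeff_ge_if_vertices:
  fixes g P0 P1 :: "'x::finite \<Rightarrow> real"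
  assumes P0: "is_distr P0" and P1: "is_distr P1" and l: "0 < l" "l < 1"
    and e: "exp \<epsilon> = 1 + a" and a: "0 \<le> a"
    and vertex: "\<And>T. (\<Sum>x\<in>UNIV. g x * (1 + a * of_bool (x \<in> T)))
                       \<le> vertex_value a l (sum P1 T) (sum P0 T)"
    and W: "is_mechanism k W" "is_LDP \<epsilon> k W"
  shows "sum g UNIV \<le> chernoff_coeff {..<k} (out_distr P0 W) (out_distr P1 W) l"
proof -
  have column: "(\<Sum>x\<in>UNIV. g x * W x y) \<le> out_distr P0 W y powr l * out_distr P1 W y powr (1-l)"
    if y: "y < k" for y
  proof -
    have nonneg: "0 \<le> W x y" for x using W(1) y by (simp add: is_mechanism_def)
    have ratio: "W x y \<le> (1 + a) * W x' y" for x x'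
    proof -
      have "(\<Sum>y'\<in>{y}. W x y') \<le> exp \<epsilon> * (\<Sum>y'\<in>{y}. W x' y')"
        using W(2) y unfolding is_LDP_def by blast
      then show ?thesis using e by simp
    qed
    show ?thesis
    proof (rule LDP_column_cases[of "\<lambda>x. W x y" a, OF nonneg ratio])
      assume "\<And>x. W x y = 0"
      then show ?thesis by (simp add: out_distr_def)
    next
      fix m assume "0 < m" "\<And>x. m \<le> W x y" "\<And>x. W x y \<le> (1 + a) * m"
      then show ?thesis
        unfolding out_distr_def by (rule sum_le_geo_mean_if_vertices[OF P0 P1 l a vertex])
    qed
  qed
  have "sum g UNIV = (\<Sum>x\<in>UNIV. g x * (\<Sum>y<k. W x y))"
    using W(1) by (simp add: is_mechanism_def)
  also have "\<dots> = (\<Sum>y<k. \<Sum>x\<in>UNIV. g x * W x y)"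
    by (simp add: sum_distrib_left sum.swap[of _ UNIV])
  also have "\<dots> \<le> chernoff_coeff {..<k} (out_distr P0 W) (out_distr P1 W) l"
    unfolding chernoff_coeff_def by (rule sum_mono) (simp add: column)
  finally show ?thesis .
qed

lemma binary_mech_is_mechanism:
  "is_mechanism 2 (binary_mech P0 P1 \<tau> \<epsilon>)"
proof -
  have "exp \<epsilon> / (exp \<epsilon> + 1) + 1 / (exp \<epsilon> + 1) = 1"
    by (simp add: add_divide_distrib[symmetric] add_pos_pos[THEN less_imp_neq, symmetric])
  then show ?thesis
    unfolding is_mechanism_def binary_mech_def
    by (auto simp: Let_def numeral_2_eq_2 lessThan_Suc add.commute)
qed

lemma out_distr_binary_mech:
  fixes P P0 P1 :: "'x::finite \<Rightarrow> real" and \<tau> :: real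
  assumes e: "exp \<epsilon> = 1 + a" and P: "is_distr P"
  defines "U \<equiv> {x. \<tau> * P1 x \<le> P0 x}"
  shows "out_distr P (binary_mech P0 P1 \<tau> \<epsilon>) 0 = (1 + a * sum P U) / (2 + a)"
    and "out_distr P (binary_mech P0 P1 \<tau> \<epsilon>) 1 = (1 + a * (1 - sum P U)) / (2 + a)"
proof -
  have sum_if: "(\<Sum>x\<in>UNIV. P x * (if x \<in> U then b else c)) = b * sum P U + c * sum P (- U)" for b c
  proof -
    have "(\<Sum>x\<in>UNIV. P x * (if x \<in> U then b else c)) = (\<Sum>x\<in>U. P x * b) + (\<Sum>x\<in>- U. P x * c)"
      by (simp add: if_distrib sum.If_cases Compl_eq)
    then show ?thesis by (simp add: sum_distrib_left mult.commute)
  qed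
  have compl: "sum P (- U) = 1 - sum P U"
    using sum_if[of 1 1] P unfolding is_distr_def by simp
  have bm: "binary_mech P0 P1 \<tau> \<epsilon> x 0 = (if x \<in> U then 1 + a else 1) / (2 + a)"
       "binary_mech P0 P1 \<tau> \<epsilon> x 1 = (if x \<in> U then 1 else 1 + a) / (2 + a)" for x
    unfolding binary_mech_def U_def e by (auto simp: Let_def add.commute)
  have "out_distr P (binary_mech P0 P1 \<tau> \<epsilon>) 0 = (\<Sum>x\<in>UNIV. P x * (if x \<in> U then 1 + a else 1)) / (2 + a)"
    unfolding out_distr_def bm by (simp add: sum_divide_distrib)
  then show "out_distr P (binary_mech P0 P1 \<tau> \<epsilon>) 0 = (1 + a * sum P U) / (2 + a)"
    unfolding sum_if compl by (simp add: algebra_simps)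
  have "out_distr P (binary_mech P0 P1 \<tau> \<epsilon>) 1 = (\<Sum>x\<in>UNIV. P x * (if x \<in> U then 1 else 1 + a)) / (2 + a)"
    unfolding out_distr_def bm by (simp add: sum_divide_distrib)
  then show "out_distr P (binary_mech P0 P1 \<tau> \<epsilon>) 1 = (1 + a * (1 - sum P U)) / (2 + a)"
    unfolding sum_if compl by (simp add: algebra_simps)
qed

lemma powr_div_mult_powr_div:
  fixes x y c l :: real
  assumes "0 \<le> x" "0 \<le> y" "0 < c"
  shows "(x/c) powr l * (y/c) powr (1-l) = x powr l * y powr (1-l) / c"
proof -
  have "c powr l * c powr (1-l) = c" using assms by (simp add: powr_add[symmetric])
  then show ?thesis using assms by (simp add: powr_divide)
qed

lemma chernoff_coeff_binary_mech:
  fixes P0 P1 :: "'x::finite \<Rightarrow> real" and \<tau> :: real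
  assumes e: "exp \<epsilon> = 1 + a" and a: "0 \<le> a" and P0: "is_distr P0" and P1: "is_distr P1"
  defines "U \<equiv> {x. \<tau> * P1 x \<le> P0 x}"
  shows "chernoff_coeff {..<2} (out_distr P0 (binary_mech P0 P1 \<tau> \<epsilon>)) (out_distr P1 (binary_mech P0 P1 \<tau> \<epsilon>)) l
           = binary_coeff a l (sum P1 U) (sum P0 U)"
proof -
  define p where "p = sum P1 U"
  define q where "q = sum P0 U"
  let ?Q0 = "out_distr P0 (binary_mech P0 P1 \<tau> \<epsilon>)" and ?Q1 = "out_distr P1 (binary_mech P0 P1 \<tau> \<epsilon>)"
  have Q: "?Q0 0 = (1 + a*q) / (2 + a)" "?Q0 1 = (1 + a*(1-q)) / (2 + a)"
          "?Q1 0 = (1 + a*p) / (2 + a)" "?Q1 1 = (1 + a*(1-p)) / (2 + a)"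
    unfolding p_def q_def U_def by (intro out_distr_binary_mech e P0 P1)+
  have nonneg: "0 \<le> 1 + a*p" "0 \<le> 1 + a*q" "0 \<le> 1 + a*(1-p)" "0 \<le> 1 + a*(1-q)" "0 < 2 + a"
    using is_distr_sum_bounds[OF P0, of U] is_distr_sum_bounds[OF P1, of U] a
    unfolding p_def q_def by auto
  have "chernoff_coeff {..<2} ?Q0 ?Q1 l = ?Q0 0 powr l * ?Q1 0 powr (1-l) + ?Q0 1 powr l * ?Q1 1 powr (1-l)"
    by (simp add: chernoff_coeff_def numeral_2_eq_2 lessThan_Suc)
  also have "\<dots> = vertex_value a l p q / (2 + a) + vertex_value a l (1-p) (1-q) / (2 + a)"
    unfolding Q vertex_value_def using nonneg by (simp only: powr_div_mult_powr_div)
  finally show ?thesis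
    unfolding binary_coeff_def p_def q_def by (simp add: add_divide_distrib)
qed

lemma chernoff_coeff_binary_mech_ge:
  fixes P0 P1 :: "'x::finite \<Rightarrow> real"
  assumes "is_distr P0" "is_distr P1" "0 \<le> \<epsilon>" "0 < l" "l < 1"
  shows "2 / (1 + exp \<epsilon>) \<le> chernoff_coeff {..<2} (out_distr P0 (binary_mech P0 P1 \<tau> \<epsilon>))
                                                   (out_distr P1 (binary_mech P0 P1 \<tau> \<epsilon>)) l"
proof -
  have a: "exp \<epsilon> = 1 + (exp \<epsilon> - 1)" "0 \<le> exp \<epsilon> - 1" using assms(3) by auto
  show ?thesis
    unfolding chernoff_coeff_binary_mech[OF a assms(1,2)]
    using binary_coeff_ge[OF assms(4,5) a(2)] is_distr_sum_bounds[OF assms(1)] is_distr_sum_bounds[OF assms(2)]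
    by (simp add: add.commute)
qed

section \<open>Optimality of the binary mechanism\<close>

lemma subset_if_sum_Int_eq:
  fixes f :: "'a \<Rightarrow> real"
  assumes "finite A" "\<And>x. x \<in> A \<Longrightarrow> 0 < f x" "sum f (T \<inter> A) = sum f A"
  shows "A \<subseteq> T"
proof (rule ccontr)
  assume "\<not> A \<subseteq> T"
  then have "0 < sum f (A - T)" using assms by (intro sum_pos) auto
  moreover have "sum f A = sum f (T \<inter> A) + sum f (A - T)"
    using sum.Int_Diff[of A f T] assms(1) by (simp add: Int_commute)
  ultimately show False using assms(3) by simp
qed

lemma disjoint_if_sum_Int_eq_0:
  fixes f :: "'a \<Rightarrow> real"
  assumes "finite A" "\<And>x. x \<in> A \<Longrightarrow> 0 < f x" "sum f (T \<inter> A) = 0"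
  shows "T \<inter> A = {}"
proof (rule ccontr)
  assume "T \<inter> A \<noteq> {}"
  then have "0 < sum f (T \<inter> A)" using assms by (intro sum_pos) auto
  then show False using assms(3) by simp
qed

locale distr_pair =
  fixes P0 P1 :: "'x::finite \<Rightarrow> real"
  assumes P0: "is_distr P0" and P1: "is_distr P1"
begin

definition "pos_set = {x. P1 x < P0 x}"

definition "tie_set = {x. P0 x = P1 x}"

definition "neg_set = {x. P0 x < P1 x}"

definition "\<Delta> x = P0 x - P1 x"

definition "tv = sum \<Delta> pos_set"

definition "z_mass = sum P1 tie_set"

definition "pS = sum P1 pos_set"

abbreviation "binary_chernoff_coeff \<tau> \<epsilon> \<equiv>
  chernoff_coeff {..<2} (out_distr P0 (binary_mech P0 P1 \<tau> \<epsilon>)) (out_distr P1 (binary_mech P0 P1 \<tau> \<epsilon>))"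

lemma sum_partition: "sum f T = sum f (T \<inter> pos_set) + sum f (T \<inter> tie_set) + sum f (T \<inter> neg_set)"
proof -
  have "T = (T \<inter> pos_set \<union> T \<inter> tie_set) \<union> T \<inter> neg_set"
    by (auto simp: pos_set_def tie_set_def neg_set_def)
  also have "sum f \<dots> = sum f (T \<inter> pos_set \<union> T \<inter> tie_set) + sum f (T \<inter> neg_set)"
    by (rule sum.union_disjoint) (auto simp: pos_set_def tie_set_def neg_set_def)
  also have "sum f (T \<inter> pos_set \<union> T \<inter> tie_set) = sum f (T \<inter> pos_set) + sum f (T \<inter> tie_set)"
    by (rule sum.union_disjoint) (auto simp: pos_set_def tie_set_def)
  finally show ?thesis .
qed

lemma sum_\<Delta>: "sum \<Delta> T = sum P0 T - sum P1 T"
  unfolding \<Delta>_def by (simp add: sum_subtractf)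

lemma sum_P0_tie: "sum P0 (T \<inter> tie_set) = sum P1 (T \<inter> tie_set)"
  unfolding tie_set_def by (intro sum.cong) auto

lemma sum_\<Delta>_split: "sum \<Delta> T = sum \<Delta> (T \<inter> pos_set) - sum (\<lambda>x. - \<Delta> x) (T \<inter> neg_set)"
  using sum_partition[of \<Delta> T] sum_P0_tie[of T] by (simp add: sum_\<Delta> sum_negf)

lemma sum_neg_\<Delta>_neg_set: "sum (\<lambda>x. - \<Delta> x) neg_set = tv"
  using sum_\<Delta>_split[of UNIV] P0 P1 by (simp add: sum_\<Delta> tv_def is_distr_def)

lemma sum_\<Delta>_parts_bounds:
  "0 \<le> sum \<Delta> (T \<inter> pos_set)" "sum \<Delta> (T \<inter> pos_set) \<le> tv"
  "0 \<le> sum (\<lambda>x. - \<Delta> x) (T \<inter> neg_set)" "sum (\<lambda>x. - \<Delta> x) (T \<inter> neg_set) \<le> tv"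
proof -
  show "0 \<le> sum \<Delta> (T \<inter> pos_set)" "sum \<Delta> (T \<inter> pos_set) \<le> tv"
    unfolding tv_def by (auto simp: \<Delta>_def pos_set_def intro!: sum_nonneg sum_mono2)
  show "0 \<le> sum (\<lambda>x. - \<Delta> x) (T \<inter> neg_set)" "sum (\<lambda>x. - \<Delta> x) (T \<inter> neg_set) \<le> tv"
    unfolding sum_neg_\<Delta>_neg_set[symmetric] by (auto simp: \<Delta>_def neg_set_def intro!: sum_nonneg sum_mono2)
qed

lemma tv_nonneg: "0 \<le> tv"
  using sum_\<Delta>_parts_bounds(1,2)[of UNIV] by simp

lemma abs_sum_\<Delta>_le: "\<bar>sum \<Delta> T\<bar> \<le> tv"
  using sum_\<Delta>_split[of T] sum_\<Delta>_parts_bounds[of T] by linarith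

lemma abs_sum_\<Delta>_eq_tv:
  assumes "\<bar>sum \<Delta> T\<bar> = tv"
  shows "(pos_set \<subseteq> T \<and> T \<inter> neg_set = {}) \<or> (neg_set \<subseteq> T \<and> T \<inter> pos_set = {})"
proof -
  have pos: "0 < \<Delta> x" if "x \<in> pos_set" for x using that by (simp add: \<Delta>_def pos_set_def)
  have neg: "0 < - \<Delta> x" if "x \<in> neg_set" for x using that by (simp add: \<Delta>_def neg_set_def)
  show ?thesis
  proof (cases "0 \<le> sum \<Delta> T")
    case True
    then have "sum \<Delta> T = tv" using assms by simp
    then have "sum \<Delta> (T \<inter> pos_set) = tv" "sum (\<lambda>x. - \<Delta> x) (T \<inter> neg_set) = 0"
      using sum_\<Delta>_split[of T] sum_\<Delta>_parts_bounds[of T] by linarith+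
    then have "pos_set \<subseteq> T" "T \<inter> neg_set = {}"
      by (intro subset_if_sum_Int_eq[where f = \<Delta>] disjoint_if_sum_Int_eq_0[where f = "\<lambda>x. - \<Delta> x"];
          use pos neg in \<open>simp add: tv_def\<close>)+
    then show ?thesis by blast
  next
    case False
    then have "sum \<Delta> T = - tv" using assms by simp
    then have "sum (\<lambda>x. - \<Delta> x) (T \<inter> neg_set) = tv" "sum \<Delta> (T \<inter> pos_set) = 0"
      using sum_\<Delta>_split[of T] sum_\<Delta>_parts_bounds[of T] by linarith+
    then have "neg_set \<subseteq> T" "T \<inter> pos_set = {}"
      by (intro subset_if_sum_Int_eq[where f = "\<lambda>x. - \<Delta> x"] disjoint_if_sum_Int_eq_0[where f = \<Delta>];
          use pos neg in \<open>simp add: sum_neg_\<Delta>_neg_set\<close>)+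
    then show ?thesis by blast
  qed
qed

lemma eq_if_tv_eq_0:
  assumes "tv = 0"
  shows "P0 = P1"
proof
  fix x
  have "UNIV \<inter> pos_set = {}"
    by (rule disjoint_if_sum_Int_eq_0[where f = \<Delta>]) (use assms in \<open>auto simp: tv_def \<Delta>_def pos_set_def\<close>)
  moreover have "UNIV \<inter> neg_set = {}"
    by (rule disjoint_if_sum_Int_eq_0[where f = "\<lambda>x. - \<Delta> x"])
      (use assms sum_neg_\<Delta>_neg_set in \<open>auto simp: \<Delta>_def neg_set_def\<close>)
  ultimately have "\<not> P1 x < P0 x" "\<not> P0 x < P1 x" by (auto simp: pos_set_def neg_set_def)
  then show "P0 x = P1 x" by linarith
qed

lemma sum_P0_pos_set: "sum P0 pos_set = pS + tv"
  unfolding pS_def tv_def by (simp add: sum_\<Delta>)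

lemma tie_part_bounds:
  "0 \<le> sum P1 (T \<inter> tie_set)" "sum P1 (T \<inter> tie_set) \<le> z_mass"
  "\<bar>sum P1 (T \<inter> tie_set) - z_mass * sum P1 T\<bar> \<le> z_mass"
proof -
  show t: "0 \<le> sum P1 (T \<inter> tie_set)" "sum P1 (T \<inter> tie_set) \<le> z_mass"
    using P1 unfolding z_mass_def is_distr_def by (auto intro: sum_nonneg sum_mono2)
  have "0 \<le> z_mass" using t by linarith
  then have "0 \<le> z_mass * sum P1 T" "z_mass * sum P1 T \<le> z_mass"
    using is_distr_sum_bounds[OF P1, of T] by (auto simp: mult_left_le)
  then show "\<bar>sum P1 (T \<inter> tie_set) - z_mass * sum P1 T\<bar> \<le> z_mass"
    using t by (simp add: abs_le_iff)
qed

lemma sums_if_pos_extreme: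
  assumes "pos_set \<subseteq> T" "T \<inter> neg_set = {}"
  shows "sum P1 T = pS + sum P1 (T \<inter> tie_set)" "sum P0 T = pS + tv + sum P1 (T \<inter> tie_set)"
  using sum_partition[of P1 T] sum_partition[of P0 T] sum_P0_tie[of T] sum_P0_pos_set assms
  by (simp_all add: pS_def Int_absorb1 Int_commute)

lemma sums_neg_set: "sum P1 neg_set = 1 - pS - z_mass" "sum P0 neg_set = 1 - (pS + tv) - z_mass"
  using sum_partition[of P1 UNIV] sum_partition[of P0 UNIV] sum_P0_tie[of UNIV] sum_P0_pos_set P0 P1
  by (simp_all add: is_distr_def pS_def z_mass_def)

lemma sums_if_neg_extreme:
  assumes "neg_set \<subseteq> T" "T \<inter> pos_set = {}"
  shows "sum P1 T = 1 - pS - z_mass + sum P1 (T \<inter> tie_set)"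
    and "sum P0 T = 1 - (pS + tv) - z_mass + sum P1 (T \<inter> tie_set)"
  using sum_partition[of P1 T] sum_partition[of P0 T] sum_P0_tie[of T] sums_neg_set assms
  by (simp_all add: Int_absorb1 Int_commute)

lemma pos_tie_mass_le: "pS + tv + z_mass \<le> 1"
  using sums_neg_set(2) is_distr_sum_bounds(1)[OF P0, of neg_set] by simp

definition "gap = Min ((\<lambda>T. tv^2 - (sum \<Delta> T)^2) ` {T. \<bar>sum \<Delta> T\<bar> < tv})"

text \<open>The factor 200 lets the curvature gain l(1-l)/2 \<cdot> a^2 \<cdot> gap of V_minus_L_lower_bound,
  reduced by the factor 1 - z_mass, absorb its O(a^3) error terms.\<close>
definition "a_max = min (1/2) (gap * (1 - z_mass) / 200)"

lemma gap_pos: "0 < tv \<Longrightarrow> 0 < gap"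
  and gap_le: "\<bar>sum \<Delta> T\<bar> < tv \<Longrightarrow> gap \<le> tv^2 - (sum \<Delta> T)^2"
proof -
  show "gap \<le> tv^2 - (sum \<Delta> T)^2" if "\<bar>sum \<Delta> T\<bar> < tv"
    unfolding gap_def using that by (intro Min_le) auto
  assume "0 < tv"
  then have "{} \<in> {T. \<bar>sum \<Delta> T\<bar> < tv}" by simp
  then have "{T. \<bar>sum \<Delta> T\<bar> < tv} \<noteq> {}" by blast
  moreover have "0 < tv^2 - (sum \<Delta> T)^2" if "\<bar>sum \<Delta> T\<bar> < tv" for T
    using that abs_le_square_iff[of tv "sum \<Delta> T"] by (auto simp: abs_of_nonneg tv_nonneg)
  ultimately show "0 < gap" unfolding gap_def by (subst Min_gr_iff) auto
qed

lemma a_max_pos: "0 < tv \<Longrightarrow> 0 < a_max"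
  using gap_pos pos_tie_mass_le tv_nonneg is_distr_sum_bounds(1)[OF P1, of pos_set]
  by (simp add: a_max_def pS_def)

text \<open>A threshold strictly between 1 and every likelihood ratio P0 x / P1 x > 1.\<close>
definition "tau_sep = Min (insert 2 ((\<lambda>x. P0 x / P1 x) ` {x. P1 x < P0 x \<and> 0 < P1 x}))"

lemma tau_sep_gt_1: "1 < tau_sep"
  unfolding tau_sep_def by (subst Min_gr_iff) auto

lemma threshold_tau_sep: "{x. tau_sep * P1 x \<le> P0 x} = pos_set \<union> {x. P0 x = 0 \<and> P1 x = 0}"
proof -
  have "tau_sep * P1 x \<le> P0 x" if "P1 x < P0 x" for x
  proof (cases "0 < P1 x")
    case True
    then have "tau_sep \<le> P0 x / P1 x" unfolding tau_sep_def using that by (intro Min_le) auto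
    then show ?thesis using True by (simp add: le_divide_eq)
  next
    case False
    then have "P1 x = 0" using P1 unfolding is_distr_def by (metis order.antisym not_less)
    then show ?thesis using P0 unfolding is_distr_def by simp
  qed
  moreover have "P1 x < P0 x \<or> P0 x = 0 \<and> P1 x = 0" if "tau_sep * P1 x \<le> P0 x" for x
  proof (cases "0 < P1 x")
    case True
    then have "P1 x < tau_sep * P1 x" using tau_sep_gt_1 by simp
    then show ?thesis using that by simp
  next
    case False
    then have "P1 x = 0" using P1 unfolding is_distr_def by (metis order.antisym not_less)
    moreover have "0 \<le> P0 x" using P0 unfolding is_distr_def by simp
    ultimately show ?thesis by (cases "P0 x = 0") auto
  qed
  ultimately show ?thesis by (auto simp: pos_set_def)
qed

lemma threshold_sums_tau_sep:
  "sum P1 {x. tau_sep * P1 x \<le> P0 x} = pS" "sum P0 {x. tau_sep * P1 x \<le> P0 x} = pS + tv"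
proof -
  have "sum P (pos_set \<union> {x. P0 x = 0 \<and> P1 x = 0}) = sum P pos_set"
    if "\<And>x. P0 x = 0 \<Longrightarrow> P1 x = 0 \<Longrightarrow> P x = 0" for P
    using that by (intro sum.mono_neutral_right) auto
  from this[of P1] this[of P0]
  show "sum P1 {x. tau_sep * P1 x \<le> P0 x} = pS" "sum P0 {x. tau_sep * P1 x \<le> P0 x} = pS + tv"
    unfolding threshold_tau_sep by (simp_all add: pS_def sum_P0_pos_set)
qed

lemma threshold_sums_1:
  "sum P1 {x. P1 x \<le> P0 x} = pS + z_mass" "sum P0 {x. P1 x \<le> P0 x} = pS + tv + z_mass"
proof -
  have set: "{x. P1 x \<le> P0 x} = pos_set \<union> tie_set" by (auto simp: pos_set_def tie_set_def)
  have sum: "sum P (pos_set \<union> tie_set) = sum P pos_set + sum P tie_set" for P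
    by (rule sum.union_disjoint) (auto simp: pos_set_def tie_set_def)
  show "sum P1 {x. P1 x \<le> P0 x} = pS + z_mass"
    unfolding set sum pS_def z_mass_def ..
  show "sum P0 {x. P1 x \<le> P0 x} = pS + tv + z_mass"
    unfolding set sum sum_P0_pos_set using sum_P0_tie[of UNIV] by (simp add: z_mass_def)
qed

context
  fixes l a :: real
  assumes tv_pos: "0 < tv" and l: "0 < l" "l < 1" and a: "0 < a" "a \<le> a_max"
begin

lemma a_bounds: "a \<le> 1/2" "a * 200 \<le> gap * (1 - z_mass)"
  using a(2) by (auto simp: a_max_def)

interpretation dual_certificate l a pS tv z_mass
  using l a(1) a_bounds tv_pos pos_tie_mass_le tie_part_bounds(1,2)[of UNIV]
    is_distr_sum_bounds(1)[OF P1, of pos_set]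
  by unfold_locales (auto simp: pS_def)

lemma G_eq: "G = min (binary_coeff a l pS (pS + tv)) (binary_coeff a l (pS + z_mass) (pS + tv + z_mass))"
  by (simp add: G_def)

lemma L_le_vertex_value:
  "L (sum P1 T) (sum P0 T) (sum P1 (T \<inter> tie_set)) \<le> vertex_value a l (sum P1 T) (sum P0 T)"
proof (cases "\<bar>sum \<Delta> T\<bar> < tv")
  case True
  show ?thesis
  proof (rule L_le_V_interior)
    show "\<bar>sum P1 (T \<inter> tie_set) - z_mass * sum P1 T\<bar> \<le> z_mass" by (rule tie_part_bounds)
    show "gap \<le> tv^2 - (sum P0 T - sum P1 T)^2" using gap_le[OF True] by (simp add: sum_\<Delta>)
    show "a * 200 \<le> gap * (1 - z_mass)" by (rule a_bounds)
  qed (use is_distr_sum_bounds[OF P0] is_distr_sum_bounds[OF P1] in auto)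
next
  case False
  then have "\<bar>sum \<Delta> T\<bar> = tv" using abs_sum_\<Delta>_le[of T] by simp
  then consider "pos_set \<subseteq> T" "T \<inter> neg_set = {}" | "neg_set \<subseteq> T" "T \<inter> pos_set = {}"
    using abs_sum_\<Delta>_eq_tv by blast
  then show ?thesis
  proof cases
    case 1
    then show ?thesis
      using L_le_V_pos_edge[OF tie_part_bounds(1,2)] by (simp add: sums_if_pos_extreme)
  next
    case 2
    then show ?thesis
      using L_le_V_neg_edge[OF tie_part_bounds(1,2)] by (simp add: sums_if_neg_extreme)
  qed
qed

definition "cert x = G * ((1-l) * P1 x + l * P0 x) + kd * \<Delta> x
                      + kw * (of_bool (x \<in> tie_set) * P1 x - z_mass * P1 x)"

lemma sum_cert: "sum cert T = G * ((1-l) * sum P1 T + l * sum P0 T) + kd * sum \<Delta> T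
                              + kw * (sum P1 (T \<inter> tie_set) - z_mass * sum P1 T)"
proof -
  have "(\<Sum>x\<in>T. of_bool (x \<in> tie_set) * P1 x) = (\<Sum>x\<in>T. if x \<in> tie_set then P1 x else 0)"
    by (intro sum.cong) auto
  also have "\<dots> = sum P1 (T \<inter> tie_set)"
    by (simp add: sum.inter_restrict)
  finally have "(\<Sum>x\<in>T. of_bool (x \<in> tie_set) * P1 x) = sum P1 (T \<inter> tie_set)" .
  moreover have "sum cert T = G * (\<Sum>x\<in>T. (1-l) * P1 x + l * P0 x) + kd * sum \<Delta> T
      + kw * (\<Sum>x\<in>T. of_bool (x \<in> tie_set) * P1 x - z_mass * P1 x)"
    unfolding cert_def by (simp add: sum.distrib sum_distrib_left distrib_left)
  ultimately show ?thesis
    by (simp add: sum.distrib sum_subtractf sum_distrib_left)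
qed

lemma cert_vertex:
  "(\<Sum>x\<in>UNIV. cert x * (1 + a * of_bool (x \<in> T))) = L (sum P1 T) (sum P0 T) (sum P1 (T \<inter> tie_set))"
  using P0 P1 unfolding sum_mult_one_plus_of_bool sum_cert
  by (simp add: is_distr_def sum_\<Delta> L_def vertex_linear_def z_mass_def[symmetric] algebra_simps)

lemma G_le_chernoff_coeff:
  assumes "exp \<epsilon> = 1 + a" "is_mechanism k W" "is_LDP \<epsilon> k W"
  shows "G \<le> chernoff_coeff {..<k} (out_distr P0 W) (out_distr P1 W) l"
proof -
  have "sum cert UNIV = G"
    using P0 P1 by (simp add: sum_cert is_distr_def sum_\<Delta> z_mass_def[symmetric])
  moreover have "sum cert UNIV \<le> chernoff_coeff {..<k} (out_distr P0 W) (out_distr P1 W) l"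
    using cert_vertex L_le_vertex_value a
    by (intro chernoff_coeff_ge_if_vertices[OF P0 P1 l assms(1) _ _ assms(2,3)]) auto
  ultimately show ?thesis by simp
qed

end

lemma binary_chernoff_coeff_min_le:
  assumes tv: "0 < tv" and \<epsilon>: "0 < \<epsilon>" "exp \<epsilon> \<le> 1 + a_max" and l: "0 < l" "l < 1"
    and W: "is_mechanism k W" "is_LDP \<epsilon> k W"
  shows "min (binary_chernoff_coeff tau_sep \<epsilon> l) (binary_chernoff_coeff 1 \<epsilon> l)
           \<le> chernoff_coeff {..<k} (out_distr P0 W) (out_distr P1 W) l"
proof -
  define a where "a = exp \<epsilon> - 1"
  have a: "exp \<epsilon> = 1 + a" "0 < a" "a \<le> a_max" using \<epsilon> by (auto simp: a_def)
  have "min (binary_chernoff_coeff tau_sep \<epsilon> l) (binary_chernoff_coeff 1 \<epsilon> l)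
        = dual_certificate.G l a pS tv z_mass"
    using chernoff_coeff_binary_mech[OF a(1) less_imp_le[OF a(2)] P0 P1]
    by (simp add: G_eq[OF tv l a(2,3)] threshold_sums_tau_sep threshold_sums_1)
  also have "\<dots> \<le> chernoff_coeff {..<k} (out_distr P0 W) (out_distr P1 W) l"
    by (rule G_le_chernoff_coeff[OF tv l a(2,3) a(1) W])
  finally show ?thesis .
qed

lemma binary_chernoff_coeff_min_le_small_eps:
  obtains \<epsilon>' where "0 < \<epsilon>'"
    and "\<And>\<epsilon> l k W. 0 < \<epsilon> \<Longrightarrow> \<epsilon> \<le> \<epsilon>' \<Longrightarrow> 0 < l \<Longrightarrow> l < 1 \<Longrightarrow> is_mechanism k W \<Longrightarrow> is_LDP \<epsilon> k W \<Longrightarrow>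
           min (binary_chernoff_coeff tau_sep \<epsilon> l) (binary_chernoff_coeff 1 \<epsilon> l)
             \<le> chernoff_coeff {..<k} (out_distr P0 W) (out_distr P1 W) l"
proof (cases "tv = 0")
  case True
  then have "P0 = P1" by (rule eq_if_tv_eq_0)
  show ?thesis
  proof (rule that[of 1])
    fix \<epsilon> l :: real and k and W :: "'x \<Rightarrow> nat \<Rightarrow> real"
    assume "is_mechanism k W"
    then show "min (binary_chernoff_coeff tau_sep \<epsilon> l) (binary_chernoff_coeff 1 \<epsilon> l)
                 \<le> chernoff_coeff {..<k} (out_distr P0 W) (out_distr P1 W) l"
      using \<open>P0 = P1\<close> chernoff_coeff_same_distr[OF P1]
        chernoff_coeff_same_distr[OF P1 binary_mech_is_mechanism] by simp
  qed simp
next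
  case False
  then have tv: "0 < tv" using tv_nonneg by simp
  show ?thesis
  proof (rule that)
    show "0 < ln (1 + a_max)" using a_max_pos[OF tv] by simp
    fix \<epsilon> l :: real and k and W :: "'x \<Rightarrow> nat \<Rightarrow> real"
    assume "0 < \<epsilon>" "\<epsilon> \<le> ln (1 + a_max)" "0 < l" "l < 1" "is_mechanism k W" "is_LDP \<epsilon> k W"
    moreover have "exp \<epsilon> \<le> 1 + a_max"
      using \<open>\<epsilon> \<le> ln (1 + a_max)\<close> a_max_pos[OF tv] by (simp add: ln_ge_iff)
    ultimately show "min (binary_chernoff_coeff tau_sep \<epsilon> l) (binary_chernoff_coeff 1 \<epsilon> l)
                       \<le> chernoff_coeff {..<k} (out_distr P0 W) (out_distr P1 W) l"
      using binary_chernoff_coeff_min_le[OF tv] by blast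
  qed
qed

end

theorem corollary5p4:
  fixes P0 P1 :: "'x::finite \<Rightarrow> real"
  assumes "is_distr P0" and "is_distr P1"
  shows "\<exists>\<epsilon>'>0. \<forall>\<epsilon>. 0 < \<epsilon> \<and> \<epsilon> \<le> \<epsilon>' \<longrightarrow>
           (\<exists>\<tau>>0. \<forall>k (W :: 'x \<Rightarrow> nat \<Rightarrow> real).
              is_mechanism k W \<and> is_LDP \<epsilon> k W \<longrightarrow>
              chernoff_info {..<k} (out_distr P0 W) (out_distr P1 W)
                \<le> chernoff_info {..<2} (out_distr P0 (binary_mech P0 P1 \<tau> \<epsilon>))
                                       (out_distr P1 (binary_mech P0 P1 \<tau> \<epsilon>)))"
proof -
  interpret distr_pair P0 P1 by unfold_locales (fact assms)+
  obtain \<epsilon>' where "0 < \<epsilon>'" and min_le: "\<And>\<epsilon> l k (W :: 'x \<Rightarrow> nat \<Rightarrow> real).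
      0 < \<epsilon> \<Longrightarrow> \<epsilon> \<le> \<epsilon>' \<Longrightarrow> 0 < l \<Longrightarrow> l < 1 \<Longrightarrow> is_mechanism k W \<Longrightarrow> is_LDP \<epsilon> k W \<Longrightarrow>
      min (binary_chernoff_coeff tau_sep \<epsilon> l) (binary_chernoff_coeff 1 \<epsilon> l)
        \<le> chernoff_coeff {..<k} (out_distr P0 W) (out_distr P1 W) l"
    using binary_chernoff_coeff_min_le_small_eps by blast
  let ?C = "\<lambda>\<tau> \<epsilon>. chernoff_info {..<2} (out_distr P0 (binary_mech P0 P1 \<tau> \<epsilon>))
                                         (out_distr P1 (binary_mech P0 P1 \<tau> \<epsilon>))"
  define \<tau> where "\<tau> \<epsilon> = (if ?C tau_sep \<epsilon> \<le> ?C 1 \<epsilon> then 1 else tau_sep)" for \<epsilon>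
  have "0 < \<tau> \<epsilon>" for \<epsilon> using tau_sep_gt_1 by (simp add: \<tau>_def)
  moreover have "chernoff_info {..<k} (out_distr P0 W) (out_distr P1 W) \<le> ?C (\<tau> \<epsilon>) \<epsilon>"
    if "0 < \<epsilon>" "\<epsilon> \<le> \<epsilon>'" "is_mechanism k W" "is_LDP \<epsilon> k W" for \<epsilon> k W
  proof -
    have "chernoff_info {..<k} (out_distr P0 W) (out_distr P1 W) \<le> max (?C tau_sep \<epsilon>) (?C 1 \<epsilon>)"
      using that chernoff_coeff_binary_mech_ge[OF assms less_imp_le[OF that(1)]] min_le
      by (intro chernoff_info_le_max[where c = "2 / (1 + exp \<epsilon>)"]) (auto simp: add_pos_pos)
    moreover have "?C (\<tau> \<epsilon>) \<epsilon> = max (?C tau_sep \<epsilon>) (?C 1 \<epsilon>)" by (simp add: \<tau>_def max_def)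
    ultimately show ?thesis by simp
  qed
  ultimately show ?thesis using \<open>0 < \<epsilon>'\<close> by blast
qed

end
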